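(* In the situation of a path coalescing transformation, suppose in addition that $H$ is sub-additive, i.e. $H(A\cup B)\le H(A)+H(B)$ for all disjoint nonempty $A,B\subseteq X$. Then $\mathcal H(P')\le\mathcal H(P)$.
   Context: $X$ is a finite set and $H$ a real-valued function on nonempty subsets of $X$; write $H(a)=H(\{a\})$, $H(a,b)=H(\{a,b\})$; elements $a,b$ are combinatorially dependent if $H(a,b)<H(a)+H(b)$, independent otherwise. $G(X)$ is the complete undirected graph on $X$. A tour $P$ is a Hamiltonian cycle of $G(X)$ given as a directed cyclic sequence of all elements of $X$. $\mathcal S(P)$ is the set of maximal subpaths obtained by deleting from $P$ every edge whose endpoints are combinatorially independent; their vertex sets partition $X$, and $\mathcal H(P)=\sum_{Q\in\mathcal S(P)}H(V(Q))$, where $V(Q)$ is the vertex set of $Q$. A path coalescing transformation: $P_i=(u_0,\dots,u_k)$ and $P_j=(v_0,\dots,v_\ell)$ are distinct paths of $\mathcal S(P)$ with $u_k,v_0$ combinatorially dependent; $x$ is the successor of $u_k$ in $P$, $y$ the predecessor of $v_0$, $z$ the successor of $v_\ell$; $P'$ is a tour whose edge multiset is that of $P$ with $\{u_k,x\},\{y,v_0\},\{v_\ell,z\}$ replaced by $\{u_k,v_0\},\{v_\ell,x\},\{y,z\}$. *)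

theory Defs
  imports Complex_Main "HOL-Library.Multiset"
begin

definition dep :: "('a set \<Rightarrow> real) \<Rightarrow> 'a \<Rightarrow> 'a \<Rightarrow> bool" where
  "dep H a b \<longleftrightarrow> H {a, b} < H {a} + H {b}"

text \<open>A tour of X: a directed cyclic sequence listing each element of X exactly once.
  Position i is followed by position (i+1) mod n.\<close>
definition tour :: "'a set \<Rightarrow> 'a list \<Rightarrow> bool" where
  "tour X P \<longleftrightarrow> distinct P \<and> set P = X"

definition pos :: "'a list \<Rightarrow> 'a \<Rightarrow> nat" where
  "pos P v = (LEAST i. i < length P \<and> P ! i = v)"

definition succ :: "'a list \<Rightarrow> 'a \<Rightarrow> 'a" where
  "succ P v = P ! ((pos P v + 1) mod length P)"

definition pred :: "'a list \<Rightarrow> 'a \<Rightarrow> 'a" where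
  "pred P v = P ! ((pos P v + length P - 1) mod length P)"

definition tour_edges :: "'a list \<Rightarrow> 'a set multiset" where
  "tour_edges P = mset (map (\<lambda>i. {P ! i, P ! ((i + 1) mod length P)}) [0..<length P])"

definition subpath :: "'a list \<Rightarrow> 'a list \<Rightarrow> bool" where
  "subpath P Q \<longleftrightarrow> Q \<noteq> [] \<and> length Q \<le> length P \<and>
     (\<exists>i<length P. \<forall>j<length Q. Q ! j = P ! ((i + j) mod length P))"

text \<open>Q is a maximal subpath of P after deleting every edge of P with independent endpoints,
  i.e. a member of the family S(P): all its edges are dependent, and the tour edges
  entering its first vertex and leaving its last vertex are deleted (independent).\<close>
definition max_subpath :: "('a set \<Rightarrow> real) \<Rightarrow> 'a list \<Rightarrow> 'a list \<Rightarrow> bool" where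
  "max_subpath H P Q \<longleftrightarrow> subpath P Q \<and>
     (\<forall>j. j + 1 < length Q \<longrightarrow> dep H (Q ! j) (Q ! (j + 1))) \<and>
     \<not> dep H (last Q) (succ P (last Q)) \<and>
     \<not> dep H (pred P (hd Q)) (hd Q)"

definition dep_edges :: "('a set \<Rightarrow> real) \<Rightarrow> 'a list \<Rightarrow> ('a \<times> 'a) set" where
  "dep_edges H P = {(P ! i, P ! ((i + 1) mod length P)) | i. i < length P \<and>
                      dep H (P ! i) (P ! ((i + 1) mod length P))}"

text \<open>Vertex sets of the pieces of S(P): connected components of the cycle after deleting
  all independent edges (if no edge is deleted, the single piece is all of X).\<close>
definition pieces :: "('a set \<Rightarrow> real) \<Rightarrow> 'a list \<Rightarrow> 'a set set" where
  "pieces H P = (\<lambda>a. {b \<in> set P. (a, b) \<in> (dep_edges H P \<union> (dep_edges H P)\<inverse>)\<^sup>*}) ` set P"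

definition calH :: "('a set \<Rightarrow> real) \<Rightarrow> 'a list \<Rightarrow> real" where
  "calH H P = (\<Sum>B \<in> pieces H P. H B)"

definition subadditive :: "'a set \<Rightarrow> ('a set \<Rightarrow> real) \<Rightarrow> bool" where
  "subadditive X H \<longleftrightarrow> (\<forall>A B. A \<subseteq> X \<longrightarrow> B \<subseteq> X \<longrightarrow> A \<noteq> {} \<longrightarrow> B \<noteq> {} \<longrightarrow>
      A \<inter> B = {} \<longrightarrow> H (A \<union> B) \<le> H A + H B)"

end

theory Submission
  imports Defs "HOL-Library.Disjoint_Sets"
begin

(* The three edges removed by the transformation join independent elements: each of them
   leaves or enters a maximal subpath of S(P). Hence every dependent edge of P is still an
   edge of P', so each piece of S(P) lies inside a piece of S(P'). Sub-additivity then bounds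
   H of every piece of P' by the sum of H over the pieces of P it contains. *)

lemma subadditiveD:
  "subadditive X H \<Longrightarrow> A \<subseteq> X \<Longrightarrow> B \<subseteq> X \<Longrightarrow> A \<noteq> {} \<Longrightarrow> B \<noteq> {} \<Longrightarrow> A \<inter> B = {}
    \<Longrightarrow> H (A \<union> B) \<le> H A + H B"
  unfolding subadditive_def by blast

lemma subadditive_le_sum_partition:
  assumes "subadditive X H" and "finite P" and "partition_on A P" and "A \<subseteq> X" and "A \<noteq> {}"
  shows "H A \<le> sum H P"
proof -
  have "P \<noteq> {}"
    using partition_onD1[OF assms(3)] assms(5) by auto
  from assms(2) this assms(3-5) show ?thesis
  proof (induction P arbitrary: A rule: finite_ne_induct)
    case (singleton p)
    then show ?case
      by (simp add: partition_on_def)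
  next
    case (insert p P)
    have "disjnt p (\<Union>P)"
      using partition_onD2[OF insert.prems(1)] insert.hyps(3) by (auto simp: pairwise_insert)
    then have p: "p \<noteq> {}" "p \<subseteq> A" and P: "partition_on (A - p) P"
      using insert.prems(1) partition_on_insert by blast+
    have "A - p \<noteq> {}"
      using partition_onD1[OF P] partition_onD3[OF P] insert.hyps(2) by auto
    have "H A = H (p \<union> (A - p))"
      using p(2) by (simp add: Un_absorb1)
    also have "\<dots> \<le> H p + H (A - p)"
      by (rule subadditiveD[OF assms(1)]) (use p \<open>A - p \<noteq> {}\<close> insert.prems(2) in auto)
    also have "\<dots> \<le> H p + sum H P"
      using insert.IH[OF P] \<open>A - p \<noteq> {}\<close> insert.prems(2) by auto
    finally show ?case
      using insert.hyps by simp
  qed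
qed

lemma subadditive_sum_le_if_refines:
  assumes "subadditive X H" and "finite X" and "refines X P Q"
  shows "sum H Q \<le> sum H P"
proof -
  have P: "partition_on X P" and Q: "partition_on X Q" and fine: "\<forall>p\<in>P. \<exists>q\<in>Q. p \<subseteq> q"
    using assms(3) unfolding refines_def by blast+
  have "finite P" "finite Q"
    using P Q assms(2) finite_elements by blast+
  have "P = (\<Union>q\<in>Q. {p \<in> P. p \<subseteq> q})"
    using fine by blast
  also have "sum H \<dots> = (\<Sum>q\<in>Q. sum H {p \<in> P. p \<subseteq> q})"
  proof (rule sum.UNION_disjoint)
    show "\<forall>q\<in>Q. \<forall>q'\<in>Q. q \<noteq> q' \<longrightarrow> {p \<in> P. p \<subseteq> q} \<inter> {p \<in> P. p \<subseteq> q'} = {}"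
    proof (intro ballI impI)
      fix q q' assume "q \<in> Q" "q' \<in> Q" "q \<noteq> q'"
      then have "q \<inter> q' = {}"
        using disjointD[OF partition_onD2[OF Q]] by blast
      then show "{p \<in> P. p \<subseteq> q} \<inter> {p \<in> P. p \<subseteq> q'} = {}"
        using partition_onD3[OF P] by (auto dest: Int_greatest)
    qed
  qed (use \<open>finite P\<close> \<open>finite Q\<close> in auto)
  finally have "sum H P = (\<Sum>q\<in>Q. sum H {p \<in> P. p \<subseteq> q})" .
  moreover have "H q \<le> sum H {p \<in> P. p \<subseteq> q}" if "q \<in> Q" for q
  proof (rule subadditive_le_sum_partition[OF assms(1)])
    show "partition_on q {p \<in> P. p \<subseteq> q}"
      using refines_obtains_subset[OF assms(3) that] .
    show "q \<subseteq> X" "q \<noteq> {}"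
      using partition_onD1[OF Q] partition_onD3[OF Q] that by auto
  qed (use \<open>finite P\<close> in auto)
  ultimately show ?thesis
    by (simp add: sum_mono)
qed

definition components_on :: "'a set \<Rightarrow> ('a \<times> 'a) set \<Rightarrow> 'a set set" where
  "components_on A E = A // ((E \<union> E\<inverse>)\<^sup>* \<inter> A \<times> A)"

lemma equiv_Restr_rtrancl_Un_converse: "equiv A ((E \<union> E\<inverse>)\<^sup>* \<inter> A \<times> A)"
proof (rule equivI)
  show "sym ((E \<union> E\<inverse>)\<^sup>* \<inter> A \<times> A)"
    using sym_rtrancl[OF sym_Un_converse[of E]] by (auto simp: sym_def)
  show "trans ((E \<union> E\<inverse>)\<^sup>* \<inter> A \<times> A)"
    by (auto simp: trans_def)
qed (auto simp: refl_on_def)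

lemma partition_on_components_on: "partition_on A (components_on A E)"
  unfolding components_on_def using equiv_Restr_rtrancl_Un_converse by (rule partition_on_quotient)

lemma components_on_refines:
  assumes "E \<subseteq> F \<union> F\<inverse>"
  shows "refines A (components_on A E) (components_on A F)"
proof -
  have sub: "(E \<union> E\<inverse>)\<^sup>* \<inter> A \<times> A \<subseteq> (F \<union> F\<inverse>)\<^sup>* \<inter> A \<times> A"
    using assms by (intro Int_mono rtrancl_mono) auto
  have "\<exists>D\<in>components_on A F. C \<subseteq> D" if C_comp: "C \<in> components_on A E" for C
  proof -
    obtain x where "x \<in> A" and C: "C = ((E \<union> E\<inverse>)\<^sup>* \<inter> A \<times> A) `` {x}"
      using C_comp unfolding components_on_def by (blast elim: quotientE)
    show ?thesis
      unfolding components_on_def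
    proof (rule bexI)
      show "C \<subseteq> ((F \<union> F\<inverse>)\<^sup>* \<inter> A \<times> A) `` {x}"
        using sub unfolding C by blast
    qed (rule quotientI[OF \<open>x \<in> A\<close>])
  qed
  then show ?thesis
    unfolding refines_def using partition_on_components_on by blast
qed

lemma pieces_eq_components_on: "pieces H P = components_on (set P) (dep_edges H P)"
  unfolding pieces_def components_on_def quotient_def by auto

lemma dep_commute: "dep H a b = dep H b a"
  unfolding dep_def by (simp add: insert_commute add.commute)

lemma dep_edges_subset_if_dependent_edges_kept:
  assumes kept: "\<And>x y. {x, y} \<in># tour_edges P \<Longrightarrow> dep H x y \<Longrightarrow> {x, y} \<in># tour_edges P'"
  shows "dep_edges H P \<subseteq> dep_edges H P' \<union> (dep_edges H P')\<inverse>"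
proof
  fix e assume "e \<in> dep_edges H P"
  then obtain x y where e: "e = (x, y)" and "dep H x y" and "{x, y} \<in># tour_edges P"
    unfolding dep_edges_def tour_edges_def by auto
  then have "{x, y} \<in># tour_edges P'"
    using kept by blast
  then obtain j where "j < length P'" and j: "{x, y} = {P' ! j, P' ! ((j + 1) mod length P')}"
    unfolding tour_edges_def by auto
  moreover have "dep H (P' ! j) (P' ! ((j + 1) mod length P'))"
    using \<open>dep H x y\<close> j by (auto simp: doubleton_eq_iff dep_commute)
  ultimately show "e \<in> dep_edges H P' \<union> (dep_edges H P')\<inverse>"
    unfolding e dep_edges_def using j by (auto simp: doubleton_eq_iff)
qed

theorem mainTheorem4:
  fixes X :: "'a set" and H :: "'a set \<Rightarrow> real"
    and P P' Pi Pj :: "'a list"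
  assumes "finite X"
    and "tour X P"
    and "max_subpath H P Pi" and "max_subpath H P Pj" and "Pi \<noteq> Pj"
    and "dep H (last Pi) (hd Pj)"
    and "tour X P'"
    and "tour_edges P' =
           tour_edges P - {# {last Pi, succ P (last Pi)}, {pred P (hd Pj), hd Pj},
                             {last Pj, succ P (last Pj)} #}
                        + {# {last Pi, hd Pj}, {last Pj, succ P (last Pi)},
                             {pred P (hd Pj), succ P (last Pj)} #}"
    and "subadditive X H"
  shows "calH H P' \<le> calH H P"
proof -
  have X: "set P = X" "set P' = X"
    using assms(2,7) unfolding tour_def by auto
  have removed_indep: "\<not> dep H (last Pi) (succ P (last Pi))" "\<not> dep H (pred P (hd Pj)) (hd Pj)"
    "\<not> dep H (last Pj) (succ P (last Pj))"
    using assms(3,4) unfolding max_subpath_def by auto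
  have "{x, y} \<in># tour_edges P'" if "{x, y} \<in># tour_edges P" and "dep H x y" for x y
  proof -
    let ?removed = "{# {last Pi, succ P (last Pi)}, {pred P (hd Pj), hd Pj},
                      {last Pj, succ P (last Pj)} #}"
    have "{x, y} \<notin># ?removed"
      using removed_indep \<open>dep H x y\<close> by (auto simp: doubleton_eq_iff dep_commute)
    then have "{x, y} \<in># tour_edges P - ?removed"
      using that(1) unfolding in_diff_count not_in_iff by (simp only: count_greater_zero_iff)
    then show ?thesis
      unfolding assms(8) by simp
  qed
  then have "refines X (pieces H P) (pieces H P')"
    unfolding pieces_eq_components_on X
    by (intro components_on_refines dep_edges_subset_if_dependent_edges_kept)
  then show ?thesis
    unfolding calH_def using subadditive_sum_le_if_refines assms(1,9) by blast
qed

end
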